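(* Let $\alpha\in\mathbb{R}$ and let $m\ge 0$ be an even integer. Let $b_0,\dots,b_m$ be the unique solution of $$\sum_{k=0}^{i}\frac{(-1)^{i-k}}{i-k+1}\,b_k=\frac{(-1)^{i+1}}{i+2}-\binom{-\alpha}{i+1},\qquad i=0,1,\dots,m,$$ and set $c_i=\sum_{k=i}^{m}\binom{k}{i}(-1)^{k-i}b_k$ for $i=0,\dots,m$. Then for every integer $n\ge 0$, every $h>0$, and every real polynomial $f$ of degree at most $m+1$, $$\int_{-\alpha h}^{(n+\alpha)h} f(t)\,dt \;=\; h\sum_{i=0}^{n} f(ih)\;+\;h\sum_{i=0}^{m} c_i\Big[f(ih)+f\big((n-i)h\big)\Big].$$
   Context: For real $x$ and integer $j\ge 0$, $\binom{x}{j}$ denotes the generalized binomial coefficient $x(x-1)\cdots(x-j+1)/j!$ (with $\binom{x}{0}=1$). The integral limits are oriented, and nodes outside $[0,nh]$ (when $\alpha<0$ or $m>n$) are used literally. *)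

theory Defs
  imports "HOL-Analysis.Analysis" "HOL-Computational_Algebra.Polynomial"
begin

end

theory Submission
  imports Defs
begin

text \<open>
  Let \<Delta> be the forward difference p(x) \<mapsto> p(x + 1) - p(x). Newton's expansion
  p = \<Sum>_j \<Delta>^j p(0) binom(x, j) yields p'(0) = \<Sum>_{j \<ge> 1} (-1)^(j-1)/j \<Delta>^j p(0), and the
  weights c_i satisfy \<Sum>_i c_i q(i) = \<Sum>_k b_k \<Delta>^k q(0). Hence, for F of degree at most m + 1
  and \<Delta>H = F, the linear equations for b say precisely that \<Sum>_i c_i F'(i) = H'(0) - F(-\<alpha>).
  Applied to F and to its reflection x \<mapsto> -F(n - x) this accounts for both endpoints, while
  \<Sum>_{i=0..n} F'(i) = H'(n + 1) - H'(0) telescopes; so the rule is exact for integrands of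
  degree at most m. The remaining degree m + 1 is covered by (x - n/2)^(m+1), which is odd
  about n/2 because m is even, so both sides of the rule vanish on it. The substitution
  t = h x passes from step size 1 to step size h.
\<close>

definition fwd_diff :: "'a::comm_ring_1 poly \<Rightarrow> 'a poly" where
  "fwd_diff p = p \<circ>\<^sub>p [:1, 1:] - p"

definition binomial_poly :: "nat \<Rightarrow> 'a::field_char_0 poly" where
  "binomial_poly j = smult (1 / fact j) (\<Prod>i<j. [:- of_nat i, 1:])"

lemma poly_fwd_diff [simp]: "poly (fwd_diff p) x = poly p (x + 1) - poly p x"
  by (simp add: fwd_diff_def poly_pcompose algebra_simps)

lemma poly_binomial_poly [simp]: "poly (binomial_poly j) x = x gchoose j"
  by (simp add: binomial_poly_def gbinomial_prod_rev poly_prod atLeast0LessThan)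

lemma fwd_diff_const [simp]: "fwd_diff [:c:] = 0"
  by (simp add: fwd_diff_def)

lemma fwd_diff_0 [simp]: "fwd_diff 0 = 0"
  by (simp add: fwd_diff_def)

lemma fwd_diff_add: "fwd_diff (p + q) = fwd_diff p + fwd_diff q"
  by (simp add: fwd_diff_def pcompose_add)

lemma fwd_diff_diff: "fwd_diff (p - q) = fwd_diff p - fwd_diff q"
  by (simp add: fwd_diff_def pcompose_diff)

lemma fwd_diff_smult: "fwd_diff (smult c p) = smult c (fwd_diff p)"
  by (simp add: fwd_diff_def pcompose_smult smult_diff_right)

lemma fwd_diff_sum: "fwd_diff (\<Sum>i\<in>A. f i) = (\<Sum>i\<in>A. fwd_diff (f i))"
  by (induction A rule: infinite_finite_induct) (simp_all add: fwd_diff_add)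

lemma fwd_diff_pderiv:
  fixes p :: "'a::idom poly"
  shows "fwd_diff (pderiv p) = pderiv (fwd_diff p)"
  by (simp add: fwd_diff_def pderiv_diff pderiv_pcompose pderiv_pCons)

lemma funpow_fwd_diff_pderiv:
  fixes p :: "'a::idom poly"
  shows "(fwd_diff ^^ k) (pderiv p) = pderiv ((fwd_diff ^^ k) p)"
  by (induction k) (simp_all add: fwd_diff_pderiv)

lemma fwd_diff_binomial_poly: "fwd_diff (binomial_poly (Suc j)) = binomial_poly j"
  by (simp flip: poly_eq_poly_eq_iff add: fun_eq_iff gbinomial_Suc_Suc)

lemma binomial_poly_0 [simp]: "binomial_poly 0 = 1"
  by (simp add: binomial_poly_def)

lemma degree_binomial_poly: "degree (binomial_poly j :: 'a::field_char_0 poly) \<le> j"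
proof -
  have "degree (\<Prod>i<j. [:- of_nat i, 1::'a:]) \<le> (\<Sum>i<j. 1)"
    by (rule order_trans[OF degree_prod_sum_le]) simp_all
  then show ?thesis
    by (simp add: binomial_poly_def)
qed

lemma degree_fwd_diff:
  fixes p :: "'a::idom poly"
  shows "degree (fwd_diff p) \<le> degree p - 1"
proof (cases "degree p = 0")
  case True
  then show ?thesis by (auto elim: degree_eq_zeroE)
next
  case False
  have "degree (p \<circ>\<^sub>p [:1, 1:]) = degree p"
    by (simp add: degree_pcompose)
  moreover have "lead_coeff (p \<circ>\<^sub>p [:1, 1:]) = lead_coeff p"
    by (simp add: lead_coeff_comp)
  ultimately have "coeff (fwd_diff p) i = 0" if "degree p \<le> i" for i
    using that by (cases "i = degree p") (simp_all add: fwd_diff_def coeff_eq_0)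
  then show ?thesis
    using False by (intro degree_le) auto
qed

lemma degree_funpow_fwd_diff:
  fixes p :: "'a::idom poly"
  shows "degree ((fwd_diff ^^ j) p) \<le> degree p - j"
  by (induction j) (auto intro: order_trans[OF degree_fwd_diff])

lemma funpow_fwd_diff_eq_0:
  fixes p :: "'a::idom poly"
  assumes "degree p < j"
  shows "(fwd_diff ^^ j) p = 0"
proof -
  obtain k where "j = Suc k" and "degree p \<le> k"
    using assms by (cases j) auto
  then have "degree ((fwd_diff ^^ k) p) = 0"
    using degree_funpow_fwd_diff[of k p] by simp
  with \<open>j = Suc k\<close> show ?thesis
    by (auto elim: degree_eq_zeroE)
qed

lemma fwd_diff_eq_0_iff:
  fixes p :: "'a::{idom,ring_char_0} poly"
  shows "fwd_diff p = 0 \<longleftrightarrow> degree p = 0"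
proof
  assume "fwd_diff p = 0"
  then have "poly p (x + 1) = poly p x" for x
    using poly_fwd_diff[of p x] by simp
  then have "poly (p - [:poly p 0:]) (of_nat k) = 0" for k
    by (induction k) (simp_all, metis add.commute)
  then have "range of_nat \<subseteq> {x. poly (p - [:poly p 0:]) x = 0}"
    by auto
  moreover have "infinite (range (of_nat :: nat \<Rightarrow> 'a))"
    by (intro range_inj_infinite inj_of_nat)
  ultimately have "p - [:poly p 0:] = 0"
    using poly_roots_finite finite_subset by blast
  then show "degree p = 0"
    by (metis degree_pCons_0 eq_iff_diff_eq_0)
qed (auto elim: degree_eq_zeroE)

lemma newton_expansion:
  fixes p :: "'a::field_char_0 poly"
  assumes "degree p \<le> d"
  shows "p = (\<Sum>j\<le>d. smult (poly ((fwd_diff ^^ j) p) 0) (binomial_poly j))"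
  using assms
proof (induction d arbitrary: p)
  case 0
  then obtain c where "p = [:c:]"
    by (auto elim: degree_eq_zeroE)
  then show ?case
    by (simp add: binomial_poly_def)
next
  case (Suc d)
  define N where "N = (\<Sum>j\<le>Suc d. smult (poly ((fwd_diff ^^ j) p) 0) (binomial_poly j))"
  have "fwd_diff N = (\<Sum>j\<le>d. smult (poly ((fwd_diff ^^ j) (fwd_diff p)) 0) (binomial_poly j))"
    unfolding N_def sum.atMost_Suc_shift
    by (simp add: fwd_diff_add fwd_diff_sum fwd_diff_smult fwd_diff_binomial_poly funpow_Suc_right
        del: funpow.simps)
  also have "\<dots> = fwd_diff p"
    using Suc.prems degree_fwd_diff[of p] by (intro Suc.IH[symmetric]) simp
  finally have "degree (p - N) = 0"
    by (simp flip: fwd_diff_eq_0_iff add: fwd_diff_diff)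
  moreover have "poly (p - N) 0 = 0"
    unfolding N_def sum.atMost_Suc_shift by (simp add: poly_sum)
  ultimately have "p - N = 0"
    by (elim degree_eq_zeroE) simp
  then show ?case
    by (simp add: N_def)
qed

lemma sum_fwd_diff:
  assumes "fwd_diff H = P"
  shows "(\<Sum>i=0..n. poly P (of_nat i)) = poly H (of_nat n + 1) - poly H 0"
proof -
  have "(\<Sum>i=0..n. poly P (of_nat i)) = (\<Sum>i=0..n. poly H (of_nat (Suc i)) - poly H (of_nat i))"
    unfolding assms[symmetric] poly_fwd_diff by (simp add: add.commute)
  also have "\<dots> = poly H (of_nat (Suc n)) - poly H (of_nat 0)"
    by (rule sum_Suc_diff) simp
  finally show ?thesis
    by (simp add: add.commute)
qed

lemma alternating_binomial_sum_Suc: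
  fixes g :: "nat \<Rightarrow> 'a::comm_ring_1"
  shows "(\<Sum>i\<le>Suc k. of_nat (Suc k choose i) * (-1) ^ (Suc k - i) * g i)
       = (\<Sum>i\<le>k. of_nat (k choose i) * (-1) ^ (k - i) * (g (Suc i) - g i))"
proof -
  have shift: "(\<Sum>i\<le>Suc k. of_nat (j choose i) * (-1) ^ (Suc k - i) * g i)
      = (-1) ^ Suc k * g 0 + (\<Sum>i\<le>k. of_nat (j choose Suc i) * (-1) ^ (k - i) * g (Suc i))" for j
    by (subst sum.atMost_Suc_shift) simp
  have lower: "(\<Sum>i\<le>k. of_nat (k choose i) * (-1) ^ (k - i) * g i)
      = - (\<Sum>i\<le>Suc k. of_nat (k choose i) * (-1) ^ (Suc k - i) * g i)"
    by (simp add: Suc_diff_le binomial_eq_0 sum_negf[symmetric])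
  have "(\<Sum>i\<le>k. of_nat (k choose i) * (-1) ^ (k - i) * (g (Suc i) - g i))
      = (\<Sum>i\<le>k. of_nat (k choose i) * (-1) ^ (k - i) * g (Suc i))
        - (\<Sum>i\<le>k. of_nat (k choose i) * (-1) ^ (k - i) * g i)"
    by (simp add: right_diff_distrib sum_subtractf)
  then show ?thesis
    unfolding lower shift binomial_Suc_Suc of_nat_add distrib_right sum.distrib by simp
qed

lemma poly_funpow_fwd_diff:
  "poly ((fwd_diff ^^ k) p) x = (\<Sum>i\<le>k. of_nat (k choose i) * (-1) ^ (k - i) * poly p (x + of_nat i))"
proof (induction k arbitrary: x)
  case (Suc k)
  have "poly ((fwd_diff ^^ Suc k) p) x
      = (\<Sum>i\<le>k. of_nat (k choose i) * (-1) ^ (k - i) * (poly p (x + of_nat (Suc i)) - poly p (x + of_nat i)))"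
    by (simp add: Suc.IH sum_subtractf right_diff_distrib add_ac)
  then show ?case
    by (simp only: alternating_binomial_sum_Suc)
qed simp

lemma poly_pderiv_binomial_poly_0:
  "poly (pderiv (binomial_poly (Suc k) :: 'a::field_char_0 poly)) 0 = (-1) ^ k / of_nat (Suc k)"
proof -
  define Q :: "'a poly" where "Q = (\<Prod>i<k. [:- of_nat (Suc i), 1:])"
  have "binomial_poly (Suc k) = smult (1 / fact (Suc k)) ([:0, 1:] * Q)"
    by (simp add: binomial_poly_def Q_def prod.lessThan_Suc_shift del: prod.lessThan_Suc)
  then have "poly (pderiv (binomial_poly (Suc k))) 0 = poly Q 0 / fact (Suc k)"
    by (simp add: pderiv_smult pderiv_mult pderiv_pCons)
  also have "poly Q 0 = (-1) ^ k * fact k"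
    unfolding Q_def poly_prod by (induction k) (simp_all add: fact_Suc algebra_simps)
  finally show ?thesis
    by (simp add: fact_Suc)
qed

lemma pderiv_sum: "pderiv (\<Sum>i\<in>A. f i) = (\<Sum>i\<in>A. pderiv (f i))"
  using higher_pderiv_sum[of 1 f A] by simp

lemma poly_pderiv_0_eq_fwd_diff_sum:
  fixes H :: "'a::field_char_0 poly"
  assumes "degree H \<le> d"
  shows "poly (pderiv H) 0 = (\<Sum>j<d. (-1) ^ j / of_nat (Suc j) * poly ((fwd_diff ^^ Suc j) H) 0)"
proof -
  from newton_expansion[OF assms]
  have "pderiv H = pderiv (\<Sum>j\<le>d. smult (poly ((fwd_diff ^^ j) H) 0) (binomial_poly j))"
    by (rule arg_cong)
  then show ?thesis
    by (simp add: pderiv_add pderiv_sum pderiv_smult poly_sum sum.atMost_shift poly_pderiv_binomial_poly_0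
        mult.commute del: funpow.simps)
qed

lemma fwd_diff_surj:
  fixes P :: "'a::field_char_0 poly"
  obtains H where "fwd_diff H = P" and "degree H \<le> Suc (degree P)"
proof -
  define H where "H = (\<Sum>j\<le>degree P. smult (poly ((fwd_diff ^^ j) P) 0) (binomial_poly (Suc j)))"
  have "fwd_diff H = (\<Sum>j\<le>degree P. smult (poly ((fwd_diff ^^ j) P) 0) (binomial_poly j))"
    by (simp add: H_def fwd_diff_sum fwd_diff_smult fwd_diff_binomial_poly del: funpow.simps)
  also have "\<dots> = P"
    by (rule newton_expansion[symmetric]) simp
  finally have "fwd_diff H = P" .
  moreover have "degree H \<le> Suc (degree P)"
    unfolding H_def
    by (intro degree_sum_le) (auto intro: order_trans[OF degree_smult_le] order_trans[OF degree_binomial_poly])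
  ultimately show ?thesis
    using that by blast
qed

lemma pderiv_surj:
  fixes f :: "'a::field_char_0 poly"
  obtains F where "pderiv F = f"
proof -
  have "pderiv (\<Sum>j\<le>degree f. monom (coeff f j / of_nat (Suc j)) (Suc j)) = (\<Sum>j\<le>degree f. monom (coeff f j) j)"
    by (simp add: pderiv_sum pderiv_monom del: of_nat_Suc)
  then show ?thesis
    using that poly_as_sum_of_monoms[of f] by metis
qed

lemma sum_triangle_swap:
  fixes f :: "nat \<Rightarrow> nat \<Rightarrow> 'a::comm_monoid_add"
  shows "(\<Sum>i=0..m. \<Sum>k=i..m. f i k) = (\<Sum>k=0..m. \<Sum>i=0..k. f i k)"
proof -
  have "(\<Sum>i=0..m. \<Sum>k=i..m. f i k) = (\<Sum>i\<in>{0..m}. \<Sum>k\<in>{k\<in>{0..m}. i \<le> k}. f i k)"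
    by (intro sum.cong) auto
  also have "\<dots> = (\<Sum>k\<in>{0..m}. \<Sum>i\<in>{i\<in>{0..m}. i \<le> k}. f i k)"
    by (rule sum.swap_restrict) auto
  also have "\<dots> = (\<Sum>k=0..m. \<Sum>i=0..k. f i k)"
    by (intro sum.cong) auto
  finally show ?thesis .
qed

lemma sum_square_eq_sum_convolution:
  fixes a b w :: "nat \<Rightarrow> 'a::comm_semiring_0"
  assumes "\<And>r. m < r \<Longrightarrow> a r = 0"
  shows "(\<Sum>k\<le>m. \<Sum>j\<le>m. b k * w j * a (k + j)) = (\<Sum>s\<le>m. a s * (\<Sum>k\<le>s. w (s - k) * b k))"
proof -
  have "(\<Sum>k\<le>m. \<Sum>j\<le>m. b k * w j * a (k + j)) = (\<Sum>(k, j)\<in>{..m} \<times> {..m}. b k * w j * a (k + j))"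
    by (simp add: sum.cartesian_product)
  also have "\<dots> = (\<Sum>(k, j)\<in>{(k, j). k + j \<le> m}. b k * w j * a (k + j))"
    by (rule sum.mono_neutral_right) (auto simp: assms not_le[symmetric] intro: ccontr)
  also have "\<dots> = (\<Sum>s\<le>m. \<Sum>k\<le>s. b k * w (s - k) * a (k + (s - k)))"
    by (rule sum.triangle_reindex_eq)
  also have "\<dots> = (\<Sum>s\<le>m. a s * (\<Sum>k\<le>s. w (s - k) * b k))"
    by (auto simp: sum_distrib_left mult_ac intro!: sum.cong)
  finally show ?thesis .
qed

definition endpoint_weight :: "nat \<Rightarrow> (nat \<Rightarrow> real) \<Rightarrow> nat \<Rightarrow> real" where
  "endpoint_weight m b i = (\<Sum>k=i..m. real (k choose i) * (-1) ^ (k - i) * b k)"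

definition weight_equations :: "real \<Rightarrow> nat \<Rightarrow> (nat \<Rightarrow> real) \<Rightarrow> bool" where
  "weight_equations \<alpha> m b \<longleftrightarrow> (\<forall>i\<le>m.
     (\<Sum>k=0..i. (-1) ^ (i - k) / real (i - k + 1) * b k)
       = (-1) ^ (i + 1) / real (i + 2) - ((- \<alpha>) gchoose (i + 1)))"

lemma sum_endpoint_weight:
  "(\<Sum>i=0..m. endpoint_weight m b i * poly q (real i)) = (\<Sum>k=0..m. b k * poly ((fwd_diff ^^ k) q) 0)"
proof -
  have "(\<Sum>i=0..m. endpoint_weight m b i * poly q (real i))
      = (\<Sum>k=0..m. \<Sum>i=0..k. b k * (real (k choose i) * (-1) ^ (k - i) * poly q (real i)))"
    unfolding endpoint_weight_def sum_distrib_right by (subst sum_triangle_swap) (simp add: mult_ac)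
  also have "\<dots> = (\<Sum>k=0..m. b k * poly ((fwd_diff ^^ k) q) 0)"
    by (simp add: poly_funpow_fwd_diff sum_distrib_left atLeast0AtMost del: funpow.simps)
  finally show ?thesis .
qed

lemma sum_endpoint_weight_pderiv:
  assumes weights: "weight_equations \<alpha> m b"
    and P: "degree P \<le> m + 1" and H: "fwd_diff H = P" "degree H \<le> m + 2"
  shows "(\<Sum>i=0..m. endpoint_weight m b i * poly (pderiv P) (real i)) = poly (pderiv H) 0 - poly P (- \<alpha>)"
proof -
  define a where "a r = poly ((fwd_diff ^^ r) P) 0" for r
  define w :: "nat \<Rightarrow> real" where "w j = (-1) ^ j / real (Suc j)" for j
  have a_eq_0: "a r = 0" if "m + 1 < r" for r
    using funpow_fwd_diff_eq_0[of P r] P that by (simp add: a_def)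
  have pderiv_fwd_diffs: "poly (pderiv ((fwd_diff ^^ k) P)) 0 = (\<Sum>j\<le>m. w j * a (Suc j + k))" for k
  proof -
    have "degree ((fwd_diff ^^ k) P) \<le> m + 1"
      using degree_funpow_fwd_diff[of k P] P by simp
    moreover have "(fwd_diff ^^ Suc j) ((fwd_diff ^^ k) P) = (fwd_diff ^^ (Suc j + k)) P" for j
      by (simp only: funpow_add o_apply)
    ultimately show ?thesis
      by (simp add: poly_pderiv_0_eq_fwd_diff_sum lessThan_Suc_atMost a_def w_def del: funpow.simps)
  qed
  have "(\<Sum>i=0..m. endpoint_weight m b i * poly (pderiv P) (real i))
      = (\<Sum>k\<le>m. \<Sum>j\<le>m. b k * w j * a (Suc (k + j)))"
    unfolding sum_endpoint_weight funpow_fwd_diff_pderiv pderiv_fwd_diffs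
    by (simp add: sum_distrib_left atLeast0AtMost mult_ac add_ac)
  also have "\<dots> = (\<Sum>s\<le>m. a (Suc s) * (\<Sum>k\<le>s. w (s - k) * b k))"
    using a_eq_0 by (intro sum_square_eq_sum_convolution[where a = "\<lambda>r. a (Suc r)"]) simp
  also have "\<dots> = (\<Sum>s\<le>m. a (Suc s) * (w (Suc s) - ((- \<alpha>) gchoose Suc s)))"
    using weights by (intro sum.cong) (simp_all add: weight_equations_def w_def atLeast0AtMost)
  also have "\<dots> = (\<Sum>r\<le>m + 1. a r * (w r - ((- \<alpha>) gchoose r)))"
    by (simp add: sum.atMost_Suc_shift w_def del: sum.atMost_Suc)
  also have "\<dots> = poly (pderiv H) 0 - poly P (- \<alpha>)"
  proof -
    have "poly (pderiv H) 0 = (\<Sum>r\<le>m + 1. w r * a r)"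
      using H by (simp add: poly_pderiv_0_eq_fwd_diff_sum[of H "m + 2"] lessThan_Suc_atMost a_def w_def
          funpow_Suc_right del: funpow.simps)
    moreover have "poly P (- \<alpha>) = (\<Sum>r\<le>m + 1. a r * ((- \<alpha>) gchoose r))"
      by (subst newton_expansion[OF P]) (simp add: poly_sum a_def del: funpow.simps)
    ultimately show ?thesis
      by (simp add: right_diff_distrib sum_subtractf mult.commute)
  qed
  finally show ?thesis .
qed

text \<open>The rule with unit step, stated for an antiderivative \<open>F\<close> of the integrand, whose
  integral is then \<open>F(n + \<alpha>) - F(-\<alpha>)\<close>.\<close>

definition quadrature_error :: "real \<Rightarrow> nat \<Rightarrow> (nat \<Rightarrow> real) \<Rightarrow> nat \<Rightarrow> real poly \<Rightarrow> real" where
  "quadrature_error \<alpha> m b n F =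
     poly F (real n + \<alpha>) - poly F (- \<alpha>) - (\<Sum>i=0..n. poly (pderiv F) (real i))
     - (\<Sum>i=0..m. endpoint_weight m b i * (poly (pderiv F) (real i) + poly (pderiv F) (real n - real i)))"

lemma quadrature_error_add_smult:
  "quadrature_error \<alpha> m b n (F + smult c G) = quadrature_error \<alpha> m b n F + c * quadrature_error \<alpha> m b n G"
  by (simp add: quadrature_error_def pderiv_add pderiv_smult sum.distrib sum_distrib_left algebra_simps)

lemma quadrature_error_eq_0_low_degree:
  assumes weights: "weight_equations \<alpha> m b" and F: "degree F \<le> m + 1"
  shows "quadrature_error \<alpha> m b n F = 0"
proof -
  obtain H where H: "fwd_diff H = F" and "degree H \<le> Suc (degree F)"
    by (rule fwd_diff_surj)
  with F have deg_H: "degree H \<le> m + 2"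
    by simp
  have left: "(\<Sum>i=0..m. endpoint_weight m b i * poly (pderiv F) (real i)) = poly (pderiv H) 0 - poly F (- \<alpha>)"
    by (rule sum_endpoint_weight_pderiv[OF weights F H deg_H])
  define F_refl where "F_refl = - F \<circ>\<^sub>p [:real n, -1:]"
  define H_refl where "H_refl = H \<circ>\<^sub>p [:real n + 1, -1:]"
  have "fwd_diff H_refl = F_refl"
    by (simp flip: poly_eq_poly_eq_iff H add: fun_eq_iff F_refl_def H_refl_def poly_pcompose algebra_simps)
  moreover have "degree F_refl \<le> m + 1" "degree H_refl \<le> m + 2"
    using F deg_H by (simp_all add: F_refl_def H_refl_def degree_pcompose)
  ultimately have "(\<Sum>i=0..m. endpoint_weight m b i * poly (pderiv F_refl) (real i))
      = poly (pderiv H_refl) 0 - poly F_refl (- \<alpha>)"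
    by (intro sum_endpoint_weight_pderiv[OF weights])
  then have right: "(\<Sum>i=0..m. endpoint_weight m b i * poly (pderiv F) (real n - real i))
      = poly F (real n + \<alpha>) - poly (pderiv H) (real n + 1)"
    by (simp add: F_refl_def H_refl_def pderiv_pcompose pderiv_minus pderiv_pCons poly_pcompose)
  have "fwd_diff (pderiv H) = pderiv F"
    by (simp add: fwd_diff_pderiv H)
  then have interior: "(\<Sum>i=0..n. poly (pderiv F) (real i)) = poly (pderiv H) (real n + 1) - poly (pderiv H) 0"
    by (rule sum_fwd_diff)
  show ?thesis
    by (simp add: quadrature_error_def distrib_left sum.distrib left right interior)
qed

lemma quadrature_error_centered_power:
  assumes "even m"
  shows "quadrature_error \<alpha> m b n ([:- (real n / 2), 1:] ^ (m + 2)) = 0"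
proof -
  define U where "U = [:- (real n / 2), 1:] ^ (m + 2)"
  have poly_U: "poly U x = (x - real n / 2) ^ (m + 2)" for x
    unfolding U_def poly_power by (simp del: power_Suc)
  have poly_U': "poly (pderiv U) x = real (m + 2) * (x - real n / 2) ^ (m + 1)" for x
    using pderiv_power_Suc[of "[:- (real n / 2), 1:]" "m + 1"]
    unfolding U_def by (simp add: poly_power pderiv_pCons del: power_Suc)
  have U'_odd: "poly (pderiv U) (real n - x) = - poly (pderiv U) x" for x
  proof -
    have reflect: "real n - x - real n / 2 = - (x - real n / 2)"
      by simp
    have "(- (x - real n / 2)) ^ (m + 1) = - ((x - real n / 2) ^ (m + 1))"
      using assms by (intro power_minus_odd) simp
    then show ?thesis
      unfolding poly_U' reflect by simp
  qed
  have "poly U (real n + \<alpha>) = poly U (- \<alpha>)"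
  proof -
    have reflect: "- \<alpha> - real n / 2 = - (real n + \<alpha> - real n / 2)"
      by simp
    have "(- (real n + \<alpha> - real n / 2)) ^ (m + 2) = (real n + \<alpha> - real n / 2) ^ (m + 2)"
      using assms by (intro power_minus_even) simp
    then show ?thesis
      unfolding poly_U reflect by simp
  qed
  moreover have "(\<Sum>i=0..n. poly (pderiv U) (real i)) = 0"
  proof -
    have "(\<Sum>i=0..n. poly (pderiv U) (real i)) = (\<Sum>i=0..n. poly (pderiv U) (real (n + 0 - i)))"
      by (rule sum.atLeastAtMost_rev)
    also have "\<dots> = - (\<Sum>i=0..n. poly (pderiv U) (real i))"
      by (simp add: of_nat_diff U'_odd sum_negf)
    finally show ?thesis
      by simp
  qed
  ultimately have "quadrature_error \<alpha> m b n U = 0"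
    by (simp add: quadrature_error_def U'_odd)
  then show ?thesis
    unfolding U_def .
qed

lemma quadrature_error_eq_0:
  assumes "even m" and weights: "weight_equations \<alpha> m b" and F: "degree F \<le> m + 2"
  shows "quadrature_error \<alpha> m b n F = 0"
proof -
  define U where "U = [:- (real n / 2), 1:] ^ (m + 2)"
  define G where "G = F - smult (coeff F (m + 2)) U"
  have "degree U = m + 2" "coeff U (m + 2) = 1"
    by (simp_all only: U_def degree_linear_power coeff_linear_power)
  then have "coeff G i = 0" if "m + 1 < i" for i
    using that F by (cases "i = m + 2") (simp_all add: G_def coeff_eq_0)
  then have "degree G \<le> m + 1"
    by (intro degree_le) auto
  moreover have "quadrature_error \<alpha> m b n U = 0"
    unfolding U_def using \<open>even m\<close> by (rule quadrature_error_centered_power)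
  ultimately have "quadrature_error \<alpha> m b n (G + smult (coeff F (m + 2)) U) = 0"
    using weights by (simp add: quadrature_error_add_smult quadrature_error_eq_0_low_degree)
  then show ?thesis
    by (simp add: G_def)
qed

lemma interval_integral_poly:
  assumes "pderiv F = f"
  shows "interval_lebesgue_integral lborel (ereal a) (ereal b) (\<lambda>t. poly f t) = poly F b - poly F a"
proof (rule interval_integral_FTC_finite)
  show "continuous_on {min a b..max a b} (poly f)"
    by (intro continuous_intros)
  show "(poly F has_vector_derivative poly f x) (at x within {min a b..max a b})" for x
    using poly_DERIV[of F x] assms
    by (simp add: has_real_derivative_iff_has_vector_derivative has_vector_derivative_at_within)
qed

lemma quadrature_rule_exact:
  assumes "even m" and weights: "weight_equations \<alpha> m b" and "h > 0" and deg_f: "degree f \<le> m + 1"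
  shows "interval_lebesgue_integral lborel (ereal (- \<alpha> * h)) (ereal ((real n + \<alpha>) * h)) (\<lambda>t. poly f t)
      = h * (\<Sum>i=0..n. poly f (real i * h))
        + h * (\<Sum>i=0..m. endpoint_weight m b i * (poly f (real i * h) + poly f ((real n - real i) * h)))"
proof -
  obtain F where F: "pderiv F = f"
    by (rule pderiv_surj)
  define G where "G = smult (1 / h) (F \<circ>\<^sub>p [:0, h:])"
  have G': "pderiv G = f \<circ>\<^sub>p [:0, h:]"
    using \<open>h > 0\<close> by (simp add: G_def F pderiv_smult pderiv_pcompose pderiv_pCons)
  have "degree G \<le> m + 2"
    using deg_f \<open>h > 0\<close> degree_pderiv[of F] by (simp add: G_def degree_pcompose F)
  then have "quadrature_error \<alpha> m b n G = 0"
    using \<open>even m\<close> weights by (intro quadrature_error_eq_0)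
  moreover have "interval_lebesgue_integral lborel (ereal (- \<alpha> * h)) (ereal ((real n + \<alpha>) * h)) (\<lambda>t. poly f t)
      = h * (poly G (real n + \<alpha>) - poly G (- \<alpha>))"
    using \<open>h > 0\<close> by (simp add: interval_integral_poly[OF F] G_def poly_pcompose algebra_simps)
  ultimately show ?thesis
    by (simp add: quadrature_error_def G' poly_pcompose algebra_simps)
qed

theorem mainTheorem2:
  fixes \<alpha> :: real and m :: nat and b :: "nat \<Rightarrow> real"
  assumes "even m"
    and sys: "\<And>i. i \<le> m \<Longrightarrow>
      (\<Sum>k=0..i. (-1) ^ (i - k) / real (i - k + 1) * b k)
        = (-1) ^ (i + 1) / real (i + 2) - ((- \<alpha>) gchoose (i + 1))"
  shows "\<forall>(n::nat) (h::real) (f::real poly). h > 0 \<longrightarrow> degree f \<le> m + 1 \<longrightarrow>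
      interval_lebesgue_integral lborel (ereal (- \<alpha> * h)) (ereal ((real n + \<alpha>) * h)) (\<lambda>t. poly f t)
      = h * (\<Sum>i=0..n. poly f (real i * h))
        + h * (\<Sum>i=0..m. (\<Sum>k=i..m. real (k choose i) * (-1) ^ (k - i) * b k)
                 * (poly f (real i * h) + poly f ((real n - real i) * h)))"
proof -
  have "weight_equations \<alpha> m b"
    using sys by (simp add: weight_equations_def)
  then show ?thesis
    using quadrature_rule_exact[OF \<open>even m\<close>] by (simp add: endpoint_weight_def)
qed

end
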